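(* Let $0<\epsilon\le\beta<\tfrac12$ and $b>0$. Let $\widehat Q_4$ be the estimator $$\widehat Q_4=\frac1n\sum_{i=1}^n\Big[(X_i^2-\sigma^2)(Y_i^2-\sigma^2)\mathbb 1\big(X_i^2\vee Y_i^2>\sigma^2\tau_n\big)-\eta\Big],\qquad \eta=E_{(0,0)}\big[(X_i^2-\sigma^2)(Y_i^2-\sigma^2)\mathbb 1(X_i^2\vee Y_i^2>\sigma^2\tau_n)\big],$$ with $\tau_n=4\log n$, where $E_{(0,0)}$ denotes expectation when $\mu_i=\theta_i=0$. Then there is a constant $C>0$ (depending only on $\beta,\epsilon,b,\sigma$) such that for all sufficiently large $n$, $$\sup_{(\mu,\theta)\in\Omega(\beta,\epsilon,b)}E_{(\mu,\theta)}\big(\widehat Q_4-Q(\mu,\theta)\big)^2\le C\max\Big\{n^{2\epsilon-2}(\log n)^4,\;n^{\epsilon+6b-2},\;n^{\beta+4b-2}\Big\}.$$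
   Context: Gaussian two-sequence model: one observes $X_i=\mu_i+\sigma z_i'$, $Y_i=\theta_i+\sigma z_i$, $i=1,\dots,n$, where $z_1',\dots,z_n',z_1,\dots,z_n$ are i.i.d. $N(0,1)$ and the noise level $\sigma>0$ is known. The target functional is $Q(\mu,\theta)=\frac1n\sum_{i=1}^n\mu_i^2\theta_i^2$. $a\vee b=\max\{a,b\}$. For vectors, $\|\mu\|_0$ is the number of nonzero entries, $\|\mu\|_\infty=\max_i|\mu_i|$, and $\mu\star\theta=(\mu_1\theta_1,\dots,\mu_n\theta_n)$. With $k_n=n^\beta$, $q_n=n^\epsilon$, $s_n=n^b$ (where $0<\epsilon\le\beta<\tfrac12$, $b\in\mathbb R$), the parameter space is $$\Omega(\beta,\epsilon,b)=\{(\mu,\theta)\in\mathbb R^n\times\mathbb R^n:\|\mu\|_0\le k_n,\|\mu\|_\infty\le s_n,\|\theta\|_0\le k_n,\|\theta\|_\infty\le s_n,\|\mu\star\theta\|_0\le q_n\}.$$ *)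

theory Defs
  imports "HOL-Probability.Probability"
begin

definition gauss_pair :: "real \<Rightarrow> real \<Rightarrow> real \<Rightarrow> (real \<times> real) measure" where
  "gauss_pair m t \<sigma> =
     density lborel (normal_density m \<sigma>) \<Otimes>\<^sub>M density lborel (normal_density t \<sigma>)"

definition sample_law :: "nat \<Rightarrow> (nat \<Rightarrow> real) \<Rightarrow> (nat \<Rightarrow> real) \<Rightarrow> real \<Rightarrow> (nat \<Rightarrow> real \<times> real) measure" where
  "sample_law n \<mu> \<theta> \<sigma> = PiM {..<n} (\<lambda>i. gauss_pair (\<mu> i) (\<theta> i) \<sigma>)"

definition tau :: "nat \<Rightarrow> real" where
  "tau n = 4 * ln (real n)"

definition thr_term :: "nat \<Rightarrow> real \<Rightarrow> real \<times> real \<Rightarrow> real" where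
  "thr_term n \<sigma> p = (fst p ^ 2 - \<sigma> ^ 2) * (snd p ^ 2 - \<sigma> ^ 2) *
     (if max (fst p ^ 2) (snd p ^ 2) > \<sigma> ^ 2 * tau n then 1 else 0)"

definition eta :: "nat \<Rightarrow> real \<Rightarrow> real" where
  "eta n \<sigma> = integral\<^sup>L (gauss_pair 0 0 \<sigma>) (thr_term n \<sigma>)"

definition Q4hat :: "nat \<Rightarrow> real \<Rightarrow> (nat \<Rightarrow> real \<times> real) \<Rightarrow> real" where
  "Q4hat n \<sigma> \<omega> = (1 / real n) * (\<Sum>i<n. thr_term n \<sigma> (\<omega> i) - eta n \<sigma>)"

definition Qfun :: "nat \<Rightarrow> (nat \<Rightarrow> real) \<Rightarrow> (nat \<Rightarrow> real) \<Rightarrow> real" where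
  "Qfun n \<mu> \<theta> = (1 / real n) * (\<Sum>i<n. (\<mu> i)^2 * (\<theta> i)^2)"

definition Omega :: "nat \<Rightarrow> real \<Rightarrow> real \<Rightarrow> real \<Rightarrow> ((nat \<Rightarrow> real) \<times> (nat \<Rightarrow> real)) set" where
  "Omega n \<beta> \<epsilon> b = {(\<mu>, \<theta>).
     real (card {i. i < n \<and> \<mu> i \<noteq> 0}) \<le> real n powr \<beta> \<and>
     (\<forall>i<n. \<bar>\<mu> i\<bar> \<le> real n powr b) \<and>
     real (card {i. i < n \<and> \<theta> i \<noteq> 0}) \<le> real n powr \<beta> \<and>
     (\<forall>i<n. \<bar>\<theta> i\<bar> \<le> real n powr b) \<and>
     real (card {i. i < n \<and> \<mu> i * \<theta> i \<noteq> 0}) \<le> real n powr \<epsilon>}"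

end

theory Submission
  imports Defs
begin

text \<open>
  Write \<open>A(x) = x\<^sup>2 - \<sigma>\<^sup>2\<close> and \<open>T(x) = A(x) \<one>(x\<^sup>2 \<le> \<sigma>\<^sup>2 \<tau>\<^sub>n)\<close>. Since the indicator
  of \<open>X\<^sup>2 \<or> Y\<^sup>2 > \<sigma>\<^sup>2 \<tau>\<^sub>n\<close> is \<open>1 - \<one>(X\<^sup>2 \<le> \<sigma>\<^sup>2 \<tau>\<^sub>n) \<one>(Y\<^sup>2 \<le> \<sigma>\<^sup>2 \<tau>\<^sub>n)\<close>, the
  thresholded summand is \<open>A(X) A(Y) - T(X) T(Y)\<close>; as \<open>E\<^sub>\<mu> A = \<mu>\<^sup>2\<close>, its mean is
  \<open>\<mu>\<^sup>2 \<theta>\<^sup>2 - a(\<mu>) a(\<theta>)\<close> with \<open>a(m) = E\<^sub>m T\<close>, and \<open>\<eta> = -a(0)\<^sup>2\<close>. So \<open>n (Q\<^sub>4 - Q)\<close> is a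
  sum of independent terms, and its mean square is the sum of their variances plus the square
  of the sum of their biases \<open>a(0)\<^sup>2 - a(\<mu>\<^sub>i) a(\<theta>\<^sub>i)\<close>.

  For a null coordinate the bias vanishes, and since the truncation only cuts off the Gaussian
  tail beyond \<open>4 \<sigma>\<^sup>2 log n\<close>, a Chernoff bound with weight \<open>exp (x\<^sup>2 / 4\<sigma>\<^sup>2)\<close> gives
  \<open>a(0) = O(1/n)\<close> and variance \<open>O(1/n)\<close>. The at most \<open>2 k\<^sub>n\<close> coordinates in the supports have
  variance \<open>O(s\<^sub>n\<^sup>4)\<close> and bias \<open>O(log n / n)\<close>; the at most \<open>q\<^sub>n\<close> coordinates with
  \<open>\<mu>\<^sub>i \<theta>\<^sub>i \<noteq> 0\<close> have variance \<open>O(s\<^sub>n\<^sup>6 + log\<^sup>4 n)\<close> and bias \<open>O(log\<^sup>2 n)\<close>, because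
  \<open>|a(m)| \<le> \<sigma>\<^sup>2 (\<tau>\<^sub>n + 1)\<close>.
\<close>

section \<open>Gaussian moments\<close>

abbreviation gauss :: "real \<Rightarrow> real \<Rightarrow> real measure" where
  "gauss m \<sigma> \<equiv> density lborel (normal_density m \<sigma>)"

lemma has_bochner_integral_gauss_iff:
  assumes [measurable]: "f \<in> borel_measurable borel"
  shows "has_bochner_integral (gauss m \<sigma>) f v \<longleftrightarrow>
    has_bochner_integral lborel (\<lambda>x. normal_density m \<sigma> x * f x) v"
  by (simp add: has_bochner_integral_iff integrable_density integral_density)

lemma has_bochner_integral_gauss_quartic:
  fixes m \<sigma> c0 c1 c2 c3 c4 :: real
  assumes "0 < \<sigma>"
  shows "has_bochner_integral (gauss m \<sigma>)
    (\<lambda>x. c0 + c1 * (x - m) + c2 * (x - m)^2 + c3 * (x - m)^3 + c4 * (x - m)^4)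
    (c0 + c2 * \<sigma>^2 + 3 * c4 * \<sigma>^4)"
proof (subst has_bochner_integral_gauss_iff)
  have moment: "has_bochner_integral lborel (\<lambda>x. normal_density m \<sigma> x * (x - m) ^ k)
      (if odd k then 0 else if k = 0 then 1 else if k = 2 then \<sigma>^2 else 3 * \<sigma>^4)"
    if "k \<le> 4" for k
  proof -
    from that consider "k = 0" | "k = 1" | "k = 2" | "k = 3" | "k = 4" by linarith
    then show ?thesis
      using normal_moment_even[OF assms, of m 0] normal_moment_even[OF assms, of m 1]
        normal_moment_even[OF assms, of m 2] normal_moment_odd[OF assms, of m 0]
        normal_moment_odd[OF assms, of m 1]
      by cases (simp_all add: fact_numeral power2_eq_square power4_eq_xxxx mult.assoc)
  qed
  have "has_bochner_integral lborel (\<lambda>x. c0 * (normal_density m \<sigma> x * (x - m) ^ 0)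
      + c1 * (normal_density m \<sigma> x * (x - m) ^ 1) + c2 * (normal_density m \<sigma> x * (x - m) ^ 2)
      + c3 * (normal_density m \<sigma> x * (x - m) ^ 3) + c4 * (normal_density m \<sigma> x * (x - m) ^ 4))
      (c0 * 1 + c1 * 0 + c2 * \<sigma>^2 + c3 * 0 + c4 * (3 * \<sigma>^4))"
    using moment[of 0] moment[of 1] moment[of 2] moment[of 3] moment[of 4]
    by (intro has_bochner_integral_add has_bochner_integral_mult_right) simp_all
  then show "has_bochner_integral lborel (\<lambda>x. normal_density m \<sigma> x *
      (c0 + c1 * (x - m) + c2 * (x - m)^2 + c3 * (x - m)^3 + c4 * (x - m)^4))
      (c0 + c2 * \<sigma>^2 + 3 * c4 * \<sigma>^4)"
    by (simp add: algebra_simps)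
qed simp

lemma has_bochner_integral_gauss_square:
  assumes "0 < \<sigma>"
  shows "has_bochner_integral (gauss m \<sigma>) (\<lambda>x. x^2 - \<sigma>^2) (m^2)"
  using has_bochner_integral_gauss_quartic[OF assms, of m "m^2 - \<sigma>^2" "2 * m" 1 0 0]
  by (rule has_bochner_integral_cong[THEN iffD1, rotated 3]) (simp_all add: power2_eq_square algebra_simps)

lemma has_bochner_integral_gauss_square_sq:
  assumes "0 < \<sigma>"
  shows "has_bochner_integral (gauss m \<sigma>) (\<lambda>x. (x^2 - \<sigma>^2)^2) (m^4 + 4 * m^2 * \<sigma>^2 + 2 * \<sigma>^4)"
  using has_bochner_integral_gauss_quartic[OF assms, of m "(m^2 - \<sigma>^2)^2" "4 * m * (m^2 - \<sigma>^2)"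
      "6 * m^2 - 2 * \<sigma>^2" "4 * m" 1]
  by (rule has_bochner_integral_cong[THEN iffD1, rotated 3])
     (simp_all add: power2_eq_square power3_eq_cube power4_eq_xxxx algebra_simps)

lemma normal_density_mult_exp:
  assumes "0 < \<sigma>"
  shows "normal_density 0 \<sigma> x * exp (x^2 / (4 * \<sigma>^2)) = sqrt 2 * normal_density 0 (sqrt 2 * \<sigma>) x"
proof -
  have "exp (- (x^2) / (2 * \<sigma>^2)) * exp (x^2 / (4 * \<sigma>^2)) = exp (- (x^2) / (2 * (sqrt 2 * \<sigma>)^2))"
    unfolding exp_add[symmetric] using assms by (simp add: field_simps)
  moreover have "1 / sqrt (2 * pi * \<sigma>^2) = sqrt 2 * (1 / sqrt (2 * pi * (sqrt 2 * \<sigma>)^2))"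
    using assms by (simp add: real_sqrt_mult field_simps)
  ultimately show ?thesis
    unfolding normal_density_def by (simp add: ac_simps)
qed

lemma has_bochner_integral_gauss_tilted:
  assumes "0 < \<sigma>"
  shows "has_bochner_integral (gauss 0 \<sigma>) (\<lambda>x. ((x^2 - \<sigma>^2)^2 + 1) * exp (x^2 / (4 * \<sigma>^2)))
    (sqrt 2 * (9 * \<sigma>^4 + 1))"
proof (subst has_bochner_integral_gauss_iff)
  have "0 < sqrt 2 * \<sigma>" using assms by simp
  from has_bochner_integral_gauss_quartic[OF this, of 0 "\<sigma>^4 + 1" 0 "- 2 * \<sigma>^2" 0 1]
  have "has_bochner_integral lborel (\<lambda>x. normal_density 0 (sqrt 2 * \<sigma>) x * ((x^2 - \<sigma>^2)^2 + 1))
      (9 * \<sigma>^4 + 1)"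
    by (simp add: has_bochner_integral_gauss_iff power2_eq_square power4_eq_xxxx algebra_simps)
  from has_bochner_integral_mult_right[OF this, of "sqrt 2"]
  show "has_bochner_integral lborel
      (\<lambda>x. normal_density 0 \<sigma> x * (((x^2 - \<sigma>^2)^2 + 1) * exp (x^2 / (4 * \<sigma>^2))))
      (sqrt 2 * (9 * \<sigma>^4 + 1))"
    by (rule has_bochner_integral_cong[THEN iffD1, rotated 3])
       (simp_all add: normal_density_mult_exp[OF assms, symmetric])
qed simp

section \<open>Products of probability spaces\<close>

lemma (in pair_sigma_finite) integrable_product:
  fixes f g :: "_ \<Rightarrow> real"
  assumes f: "integrable M1 f" and g: "integrable M2 g"
  shows "integrable (M1 \<Otimes>\<^sub>M M2) (\<lambda>p. f (fst p) * g (snd p))"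
proof (rule Fubini_integrable)
  have [measurable]: "f \<in> borel_measurable M1" "g \<in> borel_measurable M2"
    using f g by auto
  show "(\<lambda>p. f (fst p) * g (snd p)) \<in> borel_measurable (M1 \<Otimes>\<^sub>M M2)"
    by measurable
  have "integrable M1 (\<lambda>x. norm (f x) * (\<integral>y. norm (g y) \<partial>M2))"
    using f by (intro integrable_mult_left) auto
  then show "integrable M1 (\<lambda>x. \<integral>y. norm (f (fst (x, y)) * g (snd (x, y))) \<partial>M2)"
    by (simp add: abs_mult)
  show "AE x in M1. integrable M2 (\<lambda>y. f (fst (x, y)) * g (snd (x, y)))"
    using g by auto
qed

lemma (in pair_sigma_finite) integral_product:
  fixes f g :: "_ \<Rightarrow> real"
  assumes "integrable M1 f" and "integrable M2 g"
  shows "(\<integral>p. f (fst p) * g (snd p) \<partial>(M1 \<Otimes>\<^sub>M M2)) = integral\<^sup>L M1 f * integral\<^sup>L M2 g"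
  using integral_fst'[OF integrable_product[OF assms]] by simp

lemma (in finite_product_prob_space) integral_prod_components:
  fixes f :: "_ \<Rightarrow> _ \<Rightarrow> real"
  assumes "J \<subseteq> I" and f: "\<And>j. j \<in> J \<Longrightarrow> integrable (M j) (f j)"
  shows "integrable (PiM I M) (\<lambda>\<omega>. \<Prod>j\<in>J. f j (\<omega> j))"
    and "(\<integral>\<omega>. (\<Prod>j\<in>J. f j (\<omega> j)) \<partial>PiM I M) = (\<Prod>j\<in>J. integral\<^sup>L (M j) (f j))"
proof -
  define h where "h k = (if k \<in> J then f k else (\<lambda>_. 1))" for k
  have h: "integrable (M k) (h k)" if "k \<in> I" for k
    using f by (simp add: h_def)
  have "(\<Prod>k\<in>I. h k (\<omega> k)) = (\<Prod>j\<in>J. f j (\<omega> j))" for \<omega>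
    using \<open>J \<subseteq> I\<close> finite_index by (intro prod.mono_neutral_cong_right) (auto simp: h_def)
  moreover have "(\<Prod>k\<in>I. integral\<^sup>L (M k) (h k)) = (\<Prod>j\<in>J. integral\<^sup>L (M j) (f j))"
    using \<open>J \<subseteq> I\<close> finite_index
    by (intro prod.mono_neutral_cong_right) (auto simp: h_def M.prob_space)
  ultimately show "integrable (PiM I M) (\<lambda>\<omega>. \<Prod>j\<in>J. f j (\<omega> j))"
    and "(\<integral>\<omega>. (\<Prod>j\<in>J. f j (\<omega> j)) \<partial>PiM I M) = (\<Prod>j\<in>J. integral\<^sup>L (M j) (f j))"
    using product_integrable_prod[OF finite_index h] product_integral_prod[OF finite_index h]
    by simp_all
qed

lemma (in finite_product_prob_space) integral_square_sum_components:
  fixes w :: "_ \<Rightarrow> _ \<Rightarrow> real"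
  assumes w: "\<And>i. i \<in> I \<Longrightarrow> integrable (M i) (w i)"
    and w2: "\<And>i. i \<in> I \<Longrightarrow> integrable (M i) (\<lambda>x. (w i x)^2)"
  shows "integrable (PiM I M) (\<lambda>\<omega>. (\<Sum>i\<in>I. w i (\<omega> i))^2)"
    and "(\<integral>\<omega>. (\<Sum>i\<in>I. w i (\<omega> i))^2 \<partial>PiM I M) =
      (\<Sum>i\<in>I. integral\<^sup>L (M i) (\<lambda>x. (w i x)^2) - (integral\<^sup>L (M i) (w i))^2)
      + (\<Sum>i\<in>I. integral\<^sup>L (M i) (w i))^2"
proof -
  have cross: "integrable (PiM I M) (\<lambda>\<omega>. w i (\<omega> i) * w j (\<omega> j)) \<and>
      (\<integral>\<omega>. w i (\<omega> i) * w j (\<omega> j) \<partial>PiM I M) = integral\<^sup>L (M i) (w i) * integral\<^sup>L (M j) (w j) +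
        (if i = j then integral\<^sup>L (M i) (\<lambda>x. (w i x)^2) - (integral\<^sup>L (M i) (w i))^2 else 0)"
    if "i \<in> I" "j \<in> I" for i j
  proof (cases "i = j")
    case True
    then show ?thesis
      using integral_prod_components[of "{i}" "\<lambda>_ x. (w i x)^2"] that w2
      by (simp add: power2_eq_square)
  next
    case False
    have "integrable (M k) (w k)" if "k \<in> {i, j}" for k
      using that \<open>i \<in> I\<close> \<open>j \<in> I\<close> w by auto
    then show ?thesis
      using integral_prod_components[of "{i, j}" w] that False by simp
  qed
  have square: "(\<Sum>i\<in>I. w i (\<omega> i))^2 = (\<Sum>i\<in>I. \<Sum>j\<in>I. w i (\<omega> i) * w j (\<omega> j))" for \<omega>
    by (simp add: power2_eq_square sum_product)
  show "integrable (PiM I M) (\<lambda>\<omega>. (\<Sum>i\<in>I. w i (\<omega> i))^2)"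
    unfolding square using cross by (simp add: integrable_sum)
  have "(\<integral>\<omega>. (\<Sum>i\<in>I. w i (\<omega> i))^2 \<partial>PiM I M) =
      (\<Sum>i\<in>I. \<Sum>j\<in>I. integral\<^sup>L (M i) (w i) * integral\<^sup>L (M j) (w j) +
        (if i = j then integral\<^sup>L (M i) (\<lambda>x. (w i x)^2) - (integral\<^sup>L (M i) (w i))^2 else 0))"
    unfolding square using cross by (simp add: integral_sum integrable_sum)
  then show "(\<integral>\<omega>. (\<Sum>i\<in>I. w i (\<omega> i))^2 \<partial>PiM I M) =
      (\<Sum>i\<in>I. integral\<^sup>L (M i) (\<lambda>x. (w i x)^2) - (integral\<^sup>L (M i) (w i))^2)
      + (\<Sum>i\<in>I. integral\<^sup>L (M i) (w i))^2"
    using finite_index by (simp add: sum.distrib power2_eq_square sum_product)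
qed

lemma (in prob_space) second_moment_minus_sq_mean_le:
  fixes f :: "_ \<Rightarrow> real"
  assumes "integrable M f" and "integrable M (\<lambda>x. (f x)^2)"
  shows "expectation (\<lambda>x. (f x)^2) - (expectation f)^2 \<le> expectation (\<lambda>x. (f x - c)^2)"
proof -
  have "expectation (\<lambda>x. (f x - c)^2) = expectation (\<lambda>x. (f x)^2 - 2 * c * f x + c^2)"
    by (simp add: power2_eq_square algebra_simps)
  also have "\<dots> = expectation (\<lambda>x. (f x)^2) - 2 * c * expectation f + c^2"
    using assms prob_space by simp
  finally show ?thesis
    using zero_le_power2[of "expectation f - c"] by (simp add: power2_eq_square algebra_simps)
qed

section \<open>The thresholded summand\<close>

definition centred_square :: "real \<Rightarrow> real \<Rightarrow> real" where
  "centred_square \<sigma> x = x^2 - \<sigma>^2"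

definition truncated :: "nat \<Rightarrow> real \<Rightarrow> real \<Rightarrow> real" where
  "truncated n \<sigma> x = (if x^2 \<le> \<sigma>^2 * tau n then x^2 - \<sigma>^2 else 0)"

definition truncated_mean :: "nat \<Rightarrow> real \<Rightarrow> real \<Rightarrow> real" where
  "truncated_mean n \<sigma> m = integral\<^sup>L (gauss m \<sigma>) (truncated n \<sigma>)"

lemma centred_square_measurable [measurable]: "centred_square \<sigma> \<in> borel_measurable borel"
  unfolding centred_square_def by measurable

lemma truncated_measurable [measurable]: "truncated n \<sigma> \<in> borel_measurable borel"
  unfolding truncated_def by measurable

lemma thr_term_measurable [measurable]: "thr_term n \<sigma> \<in> borel_measurable (gauss_pair m t \<sigma>)"
  unfolding thr_term_def gauss_pair_def by measurable

lemma tau_nonneg: "0 \<le> tau n"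
  unfolding tau_def by (cases "n = 0") (auto intro: ln_ge_zero)

lemma ln_bounds:
  assumes "3 \<le> n"
  shows "1 \<le> ln (real n)" and "tau n + 1 \<le> 5 * ln (real n)" and "(ln (real n))^2 \<le> 4 * real n"
proof -
  have "exp 1 \<le> real n"
    using exp_le assms by linarith
  then show L1: "1 \<le> ln (real n)"
    using ln_exp[of 1] ln_le_cancel_iff[of "exp 1" "real n"] by (metis exp_gt_zero less_le_trans)
  then show "tau n + 1 \<le> 5 * ln (real n)"
    by (simp add: tau_def)
  have "ln (sqrt (real n)) \<le> sqrt (real n) - 1"
    using assms by (intro ln_le_minus_one) simp
  then have "ln (real n) \<le> 2 * sqrt (real n)"
    using assms by (simp add: ln_sqrt)
  from power_mono[OF this, of 2] show "(ln (real n))^2 \<le> 4 * real n"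
    using L1 by (simp add: power_mult_distrib)
qed

lemma thr_term_eq:
  "thr_term n \<sigma> p = centred_square \<sigma> (fst p) * centred_square \<sigma> (snd p)
     - truncated n \<sigma> (fst p) * truncated n \<sigma> (snd p)"
  unfolding thr_term_def centred_square_def truncated_def by auto

lemma thr_term_sq_le:
  fixes n \<sigma> p
  defines "A \<equiv> centred_square \<sigma>" and "T \<equiv> truncated n \<sigma>"
  shows "(thr_term n \<sigma> p)^2 \<le> (A (fst p))^2 * (A (snd p))^2"
    and "(thr_term n \<sigma> p)^2 \<le>
      (A (fst p) - T (fst p))^2 * (A (snd p))^2 + (A (fst p))^2 * (A (snd p) - T (snd p))^2"
  unfolding thr_term_eq A_def T_def centred_square_def truncated_def
  by (auto simp: power_mult_distrib)

lemma abs_truncated_le: "\<bar>truncated n \<sigma> x\<bar> \<le> \<sigma>^2 * (tau n + 1)"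
proof (cases "x^2 \<le> \<sigma>^2 * tau n")
  case True
  have "0 \<le> \<sigma>^2 * tau n" "0 \<le> \<sigma>^2" "0 \<le> x^2"
    using tau_nonneg[of n] by simp_all
  with True show ?thesis
    unfolding truncated_def if_P[OF True] abs_le_iff distrib_left by linarith
next
  case False
  then show ?thesis
    using tau_nonneg[of n] by (simp add: truncated_def)
qed

lemma thr_term_dev_sq_le:
  "(thr_term n \<sigma> p - c)^2 \<le>
    2 * (centred_square \<sigma> (fst p) * centred_square \<sigma> (snd p) - c)^2 + 2 * (\<sigma>^2 * (tau n + 1))^4"
proof -
  let ?K = "\<sigma>^2 * (tau n + 1)" and ?AA = "centred_square \<sigma> (fst p) * centred_square \<sigma> (snd p)"
  let ?TT = "truncated n \<sigma> (fst p) * truncated n \<sigma> (snd p)"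
  have "\<bar>?TT\<bar> \<le> ?K * ?K"
    unfolding abs_mult using tau_nonneg[of n] by (intro mult_mono abs_truncated_le) auto
  then have "?TT^2 \<le> ?K^4"
    using power_mono[of "\<bar>?TT\<bar>" "?K * ?K" 2] by (simp add: power2_eq_square power4_eq_xxxx)
  moreover have "(thr_term n \<sigma> p - c)^2 \<le> 2 * (?AA - c)^2 + 2 * ?TT^2"
    using zero_le_power2[of "?AA - c + ?TT"]
    by (simp add: thr_term_eq power2_eq_square algebra_simps)
  ultimately show ?thesis
    by linarith
qed

text \<open>A Chernoff-type bound: beyond the threshold \<open>\<sigma>\<^sup>2 \<tau>\<^sub>n\<close>, the weight
  \<open>exp (x\<^sup>2 / (4 \<sigma>\<^sup>2))\<close> exceeds \<open>n\<close>; this is where \<open>\<tau>\<^sub>n = 4 log n\<close> is used.\<close>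
lemma tail_le_tilted:
  fixes n \<sigma> x
  assumes "0 < \<sigma>" and "0 < n"
  defines "D \<equiv> centred_square \<sigma> x - truncated n \<sigma> x"
    and "B \<equiv> ((x^2 - \<sigma>^2)^2 + 1) * exp (x^2 / (4 * \<sigma>^2)) / real n"
  shows "D^2 \<le> B" and "\<bar>D\<bar> \<le> B"
proof -
  have "\<bar>a\<bar> \<le> a^2 + 1" for a :: real
    using zero_le_power2[of "\<bar>a\<bar> - 1"] by (simp add: power2_eq_square algebra_simps)
  then have "\<bar>D\<bar> \<le> (x^2 - \<sigma>^2)^2 + 1 \<and> D^2 \<le> (x^2 - \<sigma>^2)^2 + 1"
    by (simp add: D_def centred_square_def truncated_def)
  moreover have "D = 0 \<or> (x^2 - \<sigma>^2)^2 + 1 \<le> B"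
  proof (cases "x^2 \<le> \<sigma>^2 * tau n")
    case False
    then have "ln (real n) < x^2 / (4 * \<sigma>^2)"
      using assms(1) by (simp add: tau_def field_simps)
    then have "real n < exp (x^2 / (4 * \<sigma>^2))"
      using assms(2) by (metis exp_less_cancel_iff exp_ln of_nat_0_less_iff)
    then have "1 \<le> exp (x^2 / (4 * \<sigma>^2)) / real n"
      using assms(2) by simp
    from mult_left_mono[OF this, of "(x^2 - \<sigma>^2)^2 + 1"] show ?thesis
      by (simp add: B_def)
  qed (simp add: D_def centred_square_def truncated_def)
  moreover have "0 \<le> B"
    by (simp add: B_def)
  ultimately show "D^2 \<le> B" and "\<bar>D\<bar> \<le> B"
    by auto
qed

lemma second_moment_terms_le:
  fixes m M \<sigma> :: real
  assumes "\<bar>m\<bar> \<le> M" and "1 \<le> M"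
  shows "m^4 \<le> M^4" and "4 * m^2 * \<sigma>^2 + 2 * \<sigma>^4 \<le> (4 * \<sigma>^2 + 2 * \<sigma>^4) * M^2"
proof -
  show "m^4 \<le> M^4"
    using power_mono[OF assms(1), of 4] by (simp add: power_even_abs)
  have "m^2 \<le> M^2" "1 \<le> M^2"
    using power_mono[OF assms(1), of 2] assms(2) by simp_all
  then have "m^2 * \<sigma>^2 \<le> M^2 * \<sigma>^2" "1 * \<sigma>^4 \<le> M^2 * \<sigma>^4"
    by (intro mult_right_mono; simp)+
  then show "4 * m^2 * \<sigma>^2 + 2 * \<sigma>^4 \<le> (4 * \<sigma>^2 + 2 * \<sigma>^4) * M^2"
    by (simp add: algebra_simps)
qed

lemma second_moment_le:
  fixes m M \<sigma> :: real
  assumes "\<bar>m\<bar> \<le> M" and "1 \<le> M"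
  shows "m^4 + 4 * m^2 * \<sigma>^2 + 2 * \<sigma>^4 \<le> (1 + (4 * \<sigma>^2 + 2 * \<sigma>^4)) * M^4"
proof -
  have "M^2 \<le> M^4"
    using assms(2) by (intro power_increasing) auto
  then show ?thesis
    using second_moment_terms_le(1)[OF assms] second_moment_terms_le(2)[OF assms, of \<sigma>]
      mult_left_mono[of "M^2" "M^4" "4 * \<sigma>^2 + 2 * \<sigma>^4"]
    by (simp add: algebra_simps)
qed

lemma second_moment_product_le:
  fixes m t M \<sigma> :: real
  assumes "\<bar>m\<bar> \<le> M" and "\<bar>t\<bar> \<le> M" and "1 \<le> M"
  defines "R \<equiv> 4 * \<sigma>^2 + 2 * \<sigma>^4"
  shows "(m^4 + 4 * m^2 * \<sigma>^2 + 2 * \<sigma>^4) * (t^4 + 4 * t^2 * \<sigma>^2 + 2 * \<sigma>^4) - m^4 * t^4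
    \<le> (2 * R + R^2) * M^6"
proof -
  define rm where "rm = 4 * m^2 * \<sigma>^2 + 2 * \<sigma>^4"
  define rt where "rt = 4 * t^2 * \<sigma>^2 + 2 * \<sigma>^4"
  have r: "0 \<le> rm" "rm \<le> R * M^2" "0 \<le> rt" "rt \<le> R * M^2"
    using second_moment_terms_le(2)[OF assms(1,3), of \<sigma>] second_moment_terms_le(2)[OF assms(2,3), of \<sigma>]
    by (simp_all add: rm_def rt_def R_def)
  have q: "0 \<le> m^4" "m^4 \<le> M^4" "0 \<le> t^4" "t^4 \<le> M^4"
    using second_moment_terms_le(1)[OF assms(1,3)] second_moment_terms_le(1)[OF assms(2,3)] by simp_all
  have "M^4 \<le> M^6"
    using assms(3) by (intro power_increasing) auto
  have "(m^4 + rm) * (t^4 + rt) - m^4 * t^4 = m^4 * rt + rm * t^4 + rm * rt"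
    by (simp add: algebra_simps)
  also have "\<dots> \<le> M^4 * (R * M^2) + (R * M^2) * M^4 + (R * M^2) * (R * M^2)"
    using q r by (intro add_mono mult_mono) auto
  also have "\<dots> = 2 * R * M^6 + R^2 * M^4"
    by (simp add: algebra_simps eval_nat_numeral)
  also have "\<dots> \<le> (2 * R + R^2) * M^6"
    using mult_left_mono[OF \<open>M^4 \<le> M^6\<close>, of "R^2"] by (simp add: algebra_simps)
  finally show ?thesis
    by (simp add: rm_def rt_def add.assoc)
qed

definition summand_error :: "nat \<Rightarrow> real \<Rightarrow> real \<Rightarrow> real \<Rightarrow> real \<times> real \<Rightarrow> real" where
  "summand_error n \<sigma> m t p = thr_term n \<sigma> p - eta n \<sigma> - m^2 * t^2"

definition summand_mean :: "nat \<Rightarrow> real \<Rightarrow> real \<Rightarrow> real \<Rightarrow> real" where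
  "summand_mean n \<sigma> m t = integral\<^sup>L (gauss_pair m t \<sigma>) (summand_error n \<sigma> m t)"

definition summand_var :: "nat \<Rightarrow> real \<Rightarrow> real \<Rightarrow> real \<Rightarrow> real" where
  "summand_var n \<sigma> m t =
     (\<integral>p. (summand_error n \<sigma> m t p)^2 \<partial>gauss_pair m t \<sigma>) - (summand_mean n \<sigma> m t)^2"

definition summand_bound_const :: "real \<Rightarrow> real \<Rightarrow> bool" where
  "summand_bound_const \<sigma> k \<longleftrightarrow> 1 \<le> k \<and>
    (\<forall>n M m t. 3 \<le> n \<longrightarrow> 1 \<le> M \<longrightarrow> \<bar>m\<bar> \<le> M \<longrightarrow> \<bar>t\<bar> \<le> M \<longrightarrow>
     summand_var n \<sigma> m t \<le> k / real n + k * M^4 * of_bool (m \<noteq> 0 \<or> t \<noteq> 0)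
       + k * (M^6 + (ln (real n))^4) * of_bool (m * t \<noteq> 0) \<and>
     \<bar>summand_mean n \<sigma> m t\<bar> \<le> k * ln (real n) / real n * of_bool (m \<noteq> 0 \<or> t \<noteq> 0)
       + k * (ln (real n))^2 * of_bool (m * t \<noteq> 0))"

section \<open>Moments of one coordinate\<close>

context
  fixes \<sigma> :: real
  assumes \<sigma>: "0 < \<sigma>"
begin

lemma prob_space_gauss: "prob_space (gauss m \<sigma>)"
  using prob_space_normal_density[OF \<sigma>] .

lemma prob_space_gauss_pair: "prob_space (gauss_pair m t \<sigma>)"
  unfolding gauss_pair_def by (intro prob_space_pair prob_space_gauss)

lemma
  fixes f g :: "real \<Rightarrow> real"
  assumes "integrable (gauss m \<sigma>) f" and "integrable (gauss t \<sigma>) g"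
  shows integrable_gauss_pair_product: "integrable (gauss_pair m t \<sigma>) (\<lambda>p. f (fst p) * g (snd p))"
    and integral_gauss_pair_product:
      "(\<integral>p. f (fst p) * g (snd p) \<partial>gauss_pair m t \<sigma>) = integral\<^sup>L (gauss m \<sigma>) f * integral\<^sup>L (gauss t \<sigma>) g"
proof -
  interpret pair_prob_space "gauss m \<sigma>" "gauss t \<sigma>"
    by (simp add: pair_prob_space_def pair_sigma_finite_def prob_space_imp_sigma_finite prob_space_gauss)
  show "integrable (gauss_pair m t \<sigma>) (\<lambda>p. f (fst p) * g (snd p))"
    and "(\<integral>p. f (fst p) * g (snd p) \<partial>gauss_pair m t \<sigma>) = integral\<^sup>L (gauss m \<sigma>) f * integral\<^sup>L (gauss t \<sigma>) g"
    unfolding gauss_pair_def using assms by (simp_all add: integrable_product integral_product)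
qed

lemma
  shows integrable_centred_square: "integrable (gauss m \<sigma>) (centred_square \<sigma>)"
    and integral_centred_square: "integral\<^sup>L (gauss m \<sigma>) (centred_square \<sigma>) = m^2"
    and integrable_centred_square_sq: "integrable (gauss m \<sigma>) (\<lambda>x. (centred_square \<sigma> x)^2)"
    and integral_centred_square_sq:
      "(\<integral>x. (centred_square \<sigma> x)^2 \<partial>gauss m \<sigma>) = m^4 + 4 * m^2 * \<sigma>^2 + 2 * \<sigma>^4"
  using has_bochner_integral_gauss_square[OF \<sigma>, of m] has_bochner_integral_gauss_square_sq[OF \<sigma>, of m]
  unfolding centred_square_def[abs_def] by (auto dest: integrable.intros has_bochner_integral_integral_eq)

lemma integrable_truncated: "integrable (gauss m \<sigma>) (truncated n \<sigma>)"
proof -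
  interpret prob_space "gauss m \<sigma>" by (rule prob_space_gauss)
  show ?thesis
    by (rule Bochner_Integration.integrable_bound[OF integrable_const[of "\<sigma>^2 * (tau n + 1)"]])
       (use abs_truncated_le tau_nonneg in \<open>auto\<close>)
qed

lemma abs_truncated_mean_le: "\<bar>truncated_mean n \<sigma> m\<bar> \<le> \<sigma>^2 * (tau n + 1)"
proof -
  interpret prob_space "gauss m \<sigma>" by (rule prob_space_gauss)
  have "\<bar>truncated_mean n \<sigma> m\<bar> \<le> expectation (\<lambda>x. \<bar>truncated n \<sigma> x\<bar>)"
    unfolding truncated_mean_def by (rule integral_abs_bound)
  also have "\<dots> \<le> expectation (\<lambda>_. \<sigma>^2 * (tau n + 1))"
    by (intro integral_mono integrable_const abs_truncated_le)
       (use integrable_truncated in \<open>simp_all\<close>)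
  finally show ?thesis
    using prob_space by simp
qed

text \<open>Under the null the truncation only removes the Gaussian tail beyond \<open>\<sigma>\<^sup>2 \<tau>\<^sub>n\<close>,
  which costs \<open>O(1/n)\<close> by the tilted moment.\<close>
lemma
  assumes n: "0 < n"
  shows integrable_tail_sq:
      "integrable (gauss 0 \<sigma>) (\<lambda>x. (centred_square \<sigma> x - truncated n \<sigma> x)^2)"
    and integral_tail_sq_le:
      "(\<integral>x. (centred_square \<sigma> x - truncated n \<sigma> x)^2 \<partial>gauss 0 \<sigma>) \<le> sqrt 2 * (9 * \<sigma>^4 + 1) / real n"
    and abs_truncated_mean_null_le: "\<bar>truncated_mean n \<sigma> 0\<bar> \<le> sqrt 2 * (9 * \<sigma>^4 + 1) / real n"
proof -
  let ?D = "\<lambda>x. centred_square \<sigma> x - truncated n \<sigma> x"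
  let ?B = "\<lambda>x. ((x^2 - \<sigma>^2)^2 + 1) * exp (x^2 / (4 * \<sigma>^2)) / real n"
  have B: "has_bochner_integral (gauss 0 \<sigma>) ?B (sqrt 2 * (9 * \<sigma>^4 + 1) / real n)"
    using has_bochner_integral_divide_zero[OF has_bochner_integral_gauss_tilted[OF \<sigma>]] by simp
  note tail = tail_le_tilted[OF \<sigma> n]
  have D: "integrable (gauss 0 \<sigma>) ?D"
    using integrable_centred_square integrable_truncated by simp
  show D2: "integrable (gauss 0 \<sigma>) (\<lambda>x. (?D x)^2)"
    by (rule Bochner_Integration.integrable_bound[OF integrable.intros[OF B]])
       (use tail in \<open>auto intro: order_trans[OF _ tail(1)]\<close>)
  show "(\<integral>x. (?D x)^2 \<partial>gauss 0 \<sigma>) \<le> sqrt 2 * (9 * \<sigma>^4 + 1) / real n"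
    unfolding has_bochner_integral_integral_eq[OF B, symmetric]
    by (rule integral_mono[OF D2 integrable.intros[OF B] tail(1)])
  have "truncated_mean n \<sigma> 0 = - integral\<^sup>L (gauss 0 \<sigma>) ?D"
    using integral_centred_square[of 0] integrable_centred_square integrable_truncated
    by (simp add: truncated_mean_def)
  also have "\<bar>\<dots>\<bar> \<le> integral\<^sup>L (gauss 0 \<sigma>) (\<lambda>x. \<bar>?D x\<bar>)"
    unfolding abs_minus_cancel by (rule integral_abs_bound)
  also have "\<dots> \<le> sqrt 2 * (9 * \<sigma>^4 + 1) / real n"
    unfolding has_bochner_integral_integral_eq[OF B, symmetric]
    by (rule integral_mono[OF _ integrable.intros[OF B] tail(2)]) (use D in simp)
  finally show "\<bar>truncated_mean n \<sigma> 0\<bar> \<le> sqrt 2 * (9 * \<sigma>^4 + 1) / real n" .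
qed

lemma
  shows integrable_thr_term: "integrable (gauss_pair m t \<sigma>) (thr_term n \<sigma>)"
    and integral_thr_term: "integral\<^sup>L (gauss_pair m t \<sigma>) (thr_term n \<sigma>) =
      m^2 * t^2 - truncated_mean n \<sigma> m * truncated_mean n \<sigma> t"
proof -
  have eq: "thr_term n \<sigma> = (\<lambda>p. centred_square \<sigma> (fst p) * centred_square \<sigma> (snd p)
      - truncated n \<sigma> (fst p) * truncated n \<sigma> (snd p))"
    using thr_term_eq by blast
  note AA = integrable_centred_square[of m] integrable_centred_square[of t]
  note TT = integrable_truncated[of m] integrable_truncated[of t]
  show "integrable (gauss_pair m t \<sigma>) (thr_term n \<sigma>)"
    unfolding eq using AA TT by (intro Bochner_Integration.integrable_diff integrable_gauss_pair_product)
  show "integral\<^sup>L (gauss_pair m t \<sigma>) (thr_term n \<sigma>) =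
      m^2 * t^2 - truncated_mean n \<sigma> m * truncated_mean n \<sigma> t"
    unfolding eq using AA TT
    by (simp add: integrable_gauss_pair_product integral_gauss_pair_product integral_centred_square
        truncated_mean_def)
qed

lemma eta_eq: "eta n \<sigma> = - ((truncated_mean n \<sigma> 0)^2)"
  using integral_thr_term[of 0 0 n] by (simp add: eta_def power2_eq_square)

lemma
  shows integrable_thr_term_sq: "integrable (gauss_pair m t \<sigma>) (\<lambda>p. (thr_term n \<sigma> p)^2)"
    and integral_thr_term_sq_le: "(\<integral>p. (thr_term n \<sigma> p)^2 \<partial>gauss_pair m t \<sigma>) \<le>
      (m^4 + 4 * m^2 * \<sigma>^2 + 2 * \<sigma>^4) * (t^4 + 4 * t^2 * \<sigma>^2 + 2 * \<sigma>^4)"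
proof -
  note AA = integrable_gauss_pair_product[OF integrable_centred_square_sq integrable_centred_square_sq,
      of m t]
  show sq: "integrable (gauss_pair m t \<sigma>) (\<lambda>p. (thr_term n \<sigma> p)^2)"
    by (rule Bochner_Integration.integrable_bound[OF AA]) (auto intro: thr_term_sq_le(1))
  show "(\<integral>p. (thr_term n \<sigma> p)^2 \<partial>gauss_pair m t \<sigma>) \<le>
      (m^4 + 4 * m^2 * \<sigma>^2 + 2 * \<sigma>^4) * (t^4 + 4 * t^2 * \<sigma>^2 + 2 * \<sigma>^4)"
    using integral_mono[OF sq AA thr_term_sq_le(1)]
      integral_gauss_pair_product[OF integrable_centred_square_sq integrable_centred_square_sq, of m t]
    by (simp add: integral_centred_square_sq)
qed

lemma integral_thr_term_sq_null_le:
  assumes "0 < n"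
  shows "(\<integral>p. (thr_term n \<sigma> p)^2 \<partial>gauss_pair 0 0 \<sigma>) \<le> 4 * \<sigma>^4 * (sqrt 2 * (9 * \<sigma>^4 + 1)) / real n"
proof -
  let ?D = "\<lambda>x. centred_square \<sigma> x - truncated n \<sigma> x"
  let ?B = "\<lambda>p. (?D (fst p))^2 * (centred_square \<sigma> (snd p))^2
    + (centred_square \<sigma> (fst p))^2 * (?D (snd p))^2"
  note tail = integrable_tail_sq[OF assms]
  note sq = integrable_centred_square_sq[of 0]
  have "(\<integral>p. (thr_term n \<sigma> p)^2 \<partial>gauss_pair 0 0 \<sigma>) \<le> integral\<^sup>L (gauss_pair 0 0 \<sigma>) ?B"
    using tail sq
    by (intro integral_mono integrable_thr_term_sq Bochner_Integration.integrable_add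
        integrable_gauss_pair_product thr_term_sq_le(2))
  also have "\<dots> = 2 * (2 * \<sigma>^4) * (\<integral>x. (?D x)^2 \<partial>gauss 0 \<sigma>)"
    using integrable_gauss_pair_product[OF tail sq] integrable_gauss_pair_product[OF sq tail]
      integral_gauss_pair_product[OF tail sq] integral_gauss_pair_product[OF sq tail]
    by (simp add: integral_centred_square_sq)
  also have "\<dots> \<le> 2 * (2 * \<sigma>^4) * (sqrt 2 * (9 * \<sigma>^4 + 1) / real n)"
    by (intro mult_left_mono integral_tail_sq_le[OF assms]) simp
  finally show ?thesis
    by simp
qed

lemma
  shows integrable_centred_product_dev_sq: "integrable (gauss_pair m t \<sigma>)
      (\<lambda>p. (centred_square \<sigma> (fst p) * centred_square \<sigma> (snd p) - m^2 * t^2)^2)"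
    and integral_centred_product_dev_sq:
      "(\<integral>p. (centred_square \<sigma> (fst p) * centred_square \<sigma> (snd p) - m^2 * t^2)^2 \<partial>gauss_pair m t \<sigma>) =
        (m^4 + 4 * m^2 * \<sigma>^2 + 2 * \<sigma>^4) * (t^4 + 4 * t^2 * \<sigma>^2 + 2 * \<sigma>^4) - m^4 * t^4"
proof -
  let ?P = "gauss_pair m t \<sigma>" and ?c = "m^2 * t^2"
  let ?AA = "\<lambda>p. centred_square \<sigma> (fst p) * centred_square \<sigma> (snd p)"
  interpret prob_space ?P by (rule prob_space_gauss_pair)
  have expand: "(?AA p - ?c)^2 = (centred_square \<sigma> (fst p))^2 * (centred_square \<sigma> (snd p))^2
      - 2 * ?c * ?AA p + ?c^2" for p
    by (simp add: power2_eq_square algebra_simps)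
  note A = integrable_centred_square[of m] integrable_centred_square[of t]
  note A2 = integrable_centred_square_sq[of m] integrable_centred_square_sq[of t]
  show "integrable ?P (\<lambda>p. (?AA p - ?c)^2)"
    unfolding expand using integrable_gauss_pair_product[OF A2] integrable_gauss_pair_product[OF A]
    by simp
  have "(\<integral>p. (?AA p - ?c)^2 \<partial>?P) =
      (\<integral>p. (centred_square \<sigma> (fst p))^2 * (centred_square \<sigma> (snd p))^2 \<partial>?P)
      - 2 * ?c * integral\<^sup>L ?P ?AA + ?c^2"
    unfolding expand
    using integrable_gauss_pair_product[OF A2] integrable_gauss_pair_product[OF A] prob_space
    by simp
  also have "\<dots> =
      (m^4 + 4 * m^2 * \<sigma>^2 + 2 * \<sigma>^4) * (t^4 + 4 * t^2 * \<sigma>^2 + 2 * \<sigma>^4) - m^4 * t^4"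
    using integral_gauss_pair_product[OF A2] integral_gauss_pair_product[OF A]
    by (simp add: integral_centred_square integral_centred_square_sq power4_eq_xxxx)
       (simp add: power2_eq_square)
  finally show "(\<integral>p. (?AA p - ?c)^2 \<partial>?P) =
      (m^4 + 4 * m^2 * \<sigma>^2 + 2 * \<sigma>^4) * (t^4 + 4 * t^2 * \<sigma>^2 + 2 * \<sigma>^4) - m^4 * t^4" .
qed

lemma integral_thr_term_dev_sq_le:
  "(\<integral>p. (thr_term n \<sigma> p - m^2 * t^2)^2 \<partial>gauss_pair m t \<sigma>) \<le>
     2 * ((m^4 + 4 * m^2 * \<sigma>^2 + 2 * \<sigma>^4) * (t^4 + 4 * t^2 * \<sigma>^2 + 2 * \<sigma>^4) - m^4 * t^4)
     + 2 * (\<sigma>^2 * (tau n + 1))^4"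
proof -
  let ?P = "gauss_pair m t \<sigma>" and ?c = "m^2 * t^2" and ?K = "\<sigma>^2 * (tau n + 1)"
  let ?AA = "\<lambda>p. centred_square \<sigma> (fst p) * centred_square \<sigma> (snd p)"
  interpret prob_space ?P by (rule prob_space_gauss_pair)
  note dev = integrable_centred_product_dev_sq[of m t]
  have "integrable ?P (\<lambda>p. (thr_term n \<sigma> p - ?c)^2)"
    unfolding power2_diff using integrable_thr_term integrable_thr_term_sq by simp
  then have "(\<integral>p. (thr_term n \<sigma> p - ?c)^2 \<partial>?P) \<le> (\<integral>p. 2 * (?AA p - ?c)^2 + 2 * ?K^4 \<partial>?P)"
    using dev thr_term_dev_sq_le by (intro integral_mono) simp_all
  also have "\<dots> = 2 * (\<integral>p. (?AA p - ?c)^2 \<partial>?P) + 2 * ?K^4"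
    using dev prob_space by simp
  finally show ?thesis
    unfolding integral_centred_product_dev_sq .
qed

lemma
  shows integrable_summand_error: "integrable (gauss_pair m t \<sigma>) (summand_error n \<sigma> m t)"
    and integrable_summand_error_sq: "integrable (gauss_pair m t \<sigma>) (\<lambda>p. (summand_error n \<sigma> m t p)^2)"
    and summand_mean_eq: "summand_mean n \<sigma> m t =
      (truncated_mean n \<sigma> 0)^2 - truncated_mean n \<sigma> m * truncated_mean n \<sigma> t"
    and summand_var_le: "summand_var n \<sigma> m t \<le> (\<integral>p. (thr_term n \<sigma> p - c)^2 \<partial>gauss_pair m t \<sigma>)"
proof -
  interpret prob_space "gauss_pair m t \<sigma>" by (rule prob_space_gauss_pair)
  note thr = integrable_thr_term[of m t n] integrable_thr_term_sq[of m t n]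
  show w: "integrable (gauss_pair m t \<sigma>) (summand_error n \<sigma> m t)"
    using thr by (simp add: summand_error_def[abs_def])
  show w2: "integrable (gauss_pair m t \<sigma>) (\<lambda>p. (summand_error n \<sigma> m t p)^2)"
    using thr by (simp add: summand_error_def power2_diff)
  show "summand_mean n \<sigma> m t =
      (truncated_mean n \<sigma> 0)^2 - truncated_mean n \<sigma> m * truncated_mean n \<sigma> t"
    using thr prob_space
    by (simp add: summand_mean_def summand_error_def[abs_def] integral_thr_term eta_eq)
  have "summand_error n \<sigma> m t p - (c - eta n \<sigma> - m^2 * t^2) = thr_term n \<sigma> p - c" for p
    by (simp add: summand_error_def)
  with second_moment_minus_sq_mean_le[OF w w2, of "c - eta n \<sigma> - m^2 * t^2"]
  show "summand_var n \<sigma> m t \<le> (\<integral>p. (thr_term n \<sigma> p - c)^2 \<partial>gauss_pair m t \<sigma>)"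
    by (simp add: summand_var_def summand_mean_def)
qed

lemma summand_mean_null: "summand_mean n \<sigma> 0 0 = 0"
  by (simp add: summand_mean_eq power2_eq_square)

lemma summand_var_null_le:
  assumes "0 < n"
  shows "summand_var n \<sigma> 0 0 \<le> 4 * \<sigma>^4 * (sqrt 2 * (9 * \<sigma>^4 + 1)) / real n"
  using summand_var_le[where n=n and m=0 and t=0 and c=0] integral_thr_term_sq_null_le[OF assms]
  by simp

lemma abs_truncated_mean_le_ln:
  assumes "3 \<le> n"
  shows "\<bar>truncated_mean n \<sigma> m\<bar> \<le> 5 * \<sigma>^2 * ln (real n)"
  using abs_truncated_mean_le[of n m] mult_left_mono[OF ln_bounds(2)[OF assms], of "\<sigma>^2"]
  by simp

lemma abs_summand_mean_one_zero_le:
  assumes "3 \<le> n" and "m = 0 \<or> t = 0"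
  defines "G \<equiv> sqrt 2 * (9 * \<sigma>^4 + 1)" and "L \<equiv> ln (real n)"
  shows "\<bar>summand_mean n \<sigma> m t\<bar> \<le> (G^2 + 5 * \<sigma>^2 * G) * L / real n"
proof -
  have "0 < n" "1 \<le> real n" "1 \<le> L"
    using assms(1) ln_bounds(1)[OF assms(1)] by (simp_all add: L_def)
  have a0: "\<bar>truncated_mean n \<sigma> 0\<bar> \<le> G / real n"
    unfolding G_def by (rule abs_truncated_mean_null_le[OF \<open>0 < n\<close>])
  have a0x: "\<bar>truncated_mean n \<sigma> 0\<bar> * \<bar>truncated_mean n \<sigma> x\<bar> \<le> G / real n * (5 * \<sigma>^2 * L)" for x
    using a0 by (intro mult_mono abs_truncated_mean_le_ln[OF assms(1), folded L_def]) auto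
  from assms(2) have "\<bar>truncated_mean n \<sigma> m * truncated_mean n \<sigma> t\<bar> \<le> G / real n * (5 * \<sigma>^2 * L)"
    using a0x by (metis abs_mult mult.commute)
  moreover have "(truncated_mean n \<sigma> 0)^2 \<le> G^2 * L / real n"
  proof -
    have "1 / real n \<le> L"
      using \<open>1 \<le> real n\<close> \<open>1 \<le> L\<close> by (metis divide_le_eq_1 dual_order.trans less_le_trans zero_less_one)
    have "(truncated_mean n \<sigma> 0)^2 \<le> (G / real n)^2"
      using power_mono[OF a0, of 2] by simp
    also have "\<dots> = G^2 / real n * (1 / real n)"
      by (simp add: power_divide power2_eq_square)
    also have "\<dots> \<le> G^2 / real n * L"
      by (intro mult_left_mono \<open>1 / real n \<le> L\<close>) simp
    finally show ?thesis
      by simp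
  qed
  moreover have "(G^2 + 5 * \<sigma>^2 * G) * L / real n = G^2 * L / real n + G / real n * (5 * \<sigma>^2 * L)"
    by (simp add: add_divide_distrib algebra_simps)
  moreover have "\<bar>summand_mean n \<sigma> m t\<bar>
      \<le> (truncated_mean n \<sigma> 0)^2 + \<bar>truncated_mean n \<sigma> m * truncated_mean n \<sigma> t\<bar>"
    unfolding summand_mean_eq
    using abs_triangle_ineq4[of "(truncated_mean n \<sigma> 0)^2" "truncated_mean n \<sigma> m * truncated_mean n \<sigma> t"]
    by simp
  ultimately show ?thesis
    by linarith
qed

lemma summand_var_one_zero_le:
  assumes "m = 0 \<or> t = 0" and "\<bar>m\<bar> \<le> M" and "\<bar>t\<bar> \<le> M" and "1 \<le> M"
  shows "summand_var n \<sigma> m t \<le> 2 * \<sigma>^4 * (1 + (4 * \<sigma>^2 + 2 * \<sigma>^4)) * M^4"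
proof -
  let ?V = "\<lambda>x. x^4 + 4 * x^2 * \<sigma>^2 + 2 * \<sigma>^4"
  from assms(1) have "?V m * ?V t \<le> 2 * \<sigma>^4 * ((1 + (4 * \<sigma>^2 + 2 * \<sigma>^4)) * M^4)"
  proof
    assume "m = 0"
    then show ?thesis
      using mult_left_mono[OF second_moment_le[OF assms(3,4)], of "2 * \<sigma>^4"] by simp
  next
    assume "t = 0"
    then show ?thesis
      using mult_left_mono[OF second_moment_le[OF assms(2,4)], of "2 * \<sigma>^4"] by (simp add: mult.commute)
  qed
  then show ?thesis
    using summand_var_le[where n=n and m=m and t=t and c=0] integral_thr_term_sq_le[where n=n and m=m and t=t]
    by simp
qed

lemma abs_summand_mean_le:
  assumes "3 \<le> n"
  defines "G \<equiv> sqrt 2 * (9 * \<sigma>^4 + 1)" and "L \<equiv> ln (real n)"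
  shows "\<bar>summand_mean n \<sigma> m t\<bar> \<le> (G^2 + 25 * \<sigma>^4) * L^2"
proof -
  have "0 < n" "1 \<le> real n" "1 \<le> L"
    using assms(1) ln_bounds(1)[OF assms(1)] by (simp_all add: L_def)
  have "\<bar>truncated_mean n \<sigma> m * truncated_mean n \<sigma> t\<bar> \<le> (5 * \<sigma>^2 * L) * (5 * \<sigma>^2 * L)"
    unfolding abs_mult L_def using ln_bounds(1)[OF assms(1)]
    by (intro mult_mono abs_truncated_mean_le_ln[OF assms(1)]) auto
  then have "\<bar>truncated_mean n \<sigma> m * truncated_mean n \<sigma> t\<bar> \<le> 25 * \<sigma>^4 * L^2"
    by (simp add: power2_eq_square power4_eq_xxxx algebra_simps)
  moreover have "(truncated_mean n \<sigma> 0)^2 \<le> G^2 * L^2"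
  proof -
    have "\<bar>truncated_mean n \<sigma> 0\<bar> \<le> G / real n"
      using abs_truncated_mean_null_le[OF \<open>0 < n\<close>] by (simp add: G_def)
    also have "\<dots> \<le> G * L"
    proof -
      have "1 \<le> L * real n"
        using mult_mono[OF \<open>1 \<le> L\<close> \<open>1 \<le> real n\<close>] \<open>1 \<le> L\<close> by simp
      from mult_left_mono[OF this, of G] show ?thesis
        using \<open>0 < n\<close> by (simp add: G_def divide_le_eq)
    qed
    finally show ?thesis
      using power_mono[of "\<bar>truncated_mean n \<sigma> 0\<bar>" "G * L" 2] by (simp add: power_mult_distrib)
  qed
  moreover have "\<bar>summand_mean n \<sigma> m t\<bar>
      \<le> (truncated_mean n \<sigma> 0)^2 + \<bar>truncated_mean n \<sigma> m * truncated_mean n \<sigma> t\<bar>"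
    unfolding summand_mean_eq
    using abs_triangle_ineq4[of "(truncated_mean n \<sigma> 0)^2" "truncated_mean n \<sigma> m * truncated_mean n \<sigma> t"]
    by simp
  ultimately show ?thesis
    by (simp add: distrib_right)
qed

lemma summand_var_general_le:
  assumes "3 \<le> n" and "\<bar>m\<bar> \<le> M" and "\<bar>t\<bar> \<le> M" and "1 \<le> M"
  defines "R \<equiv> 4 * \<sigma>^2 + 2 * \<sigma>^4" and "L \<equiv> ln (real n)"
  shows "summand_var n \<sigma> m t \<le> 2 * (2 * R + R^2) * M^6 + 1250 * \<sigma>^8 * L^4"
proof -
  have K: "0 \<le> \<sigma>^2 * (tau n + 1)" "\<sigma>^2 * (tau n + 1) \<le> 5 * \<sigma>^2 * L"
    using tau_nonneg[of n] mult_left_mono[OF ln_bounds(2)[OF assms(1)], of "\<sigma>^2"]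
    by (simp_all add: L_def)
  have "(\<sigma>^2 * (tau n + 1))^4 \<le> 625 * \<sigma>^8 * L^4"
    using power_mono[OF K(2,1), of 4] by (simp add: power_mult_distrib flip: power_mult)
  with second_moment_product_le[OF assms(2-4), of \<sigma>, folded R_def]
  have "2 * ((m^4 + 4 * m^2 * \<sigma>^2 + 2 * \<sigma>^4) * (t^4 + 4 * t^2 * \<sigma>^2 + 2 * \<sigma>^4) - m^4 * t^4)
      + 2 * (\<sigma>^2 * (tau n + 1))^4 \<le> 2 * ((2 * R + R^2) * M^6) + 2 * (625 * \<sigma>^8 * L^4)"
    by (intro add_mono mult_left_mono) auto
  also have "\<dots> = 2 * (2 * R + R^2) * M^6 + 1250 * \<sigma>^8 * L^4"
    by simp
  finally have "2 * ((m^4 + 4 * m^2 * \<sigma>^2 + 2 * \<sigma>^4) * (t^4 + 4 * t^2 * \<sigma>^2 + 2 * \<sigma>^4) - m^4 * t^4)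
      + 2 * (\<sigma>^2 * (tau n + 1))^4 \<le> 2 * (2 * R + R^2) * M^6 + 1250 * \<sigma>^8 * L^4" .
  with summand_var_le[where n=n and m=m and t=t and c="m^2 * t^2"]
    integral_thr_term_dev_sq_le[where n=n and m=m and t=t]
  show ?thesis
    by linarith
qed

lemma summand_bound_const_exists: "\<exists>k. summand_bound_const \<sigma> k"
proof -
  define G where "G = sqrt 2 * (9 * \<sigma>^4 + 1)"
  define R where "R = 4 * \<sigma>^2 + 2 * \<sigma>^4"
  define k where "k = 1 + 4 * \<sigma>^4 * G + (G^2 + 5 * \<sigma>^2 * G) + 2 * \<sigma>^4 * (1 + R)
    + (G^2 + 25 * \<sigma>^4) + 2 * (2 * R + R^2) + 1250 * \<sigma>^8"
  have "0 \<le> G" "0 \<le> R"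
    by (simp_all add: G_def R_def)
  then have k: "1 \<le> k" "4 * \<sigma>^4 * G \<le> k" "G^2 + 5 * \<sigma>^2 * G \<le> k" "2 * \<sigma>^4 * (1 + R) \<le> k"
    "G^2 + 25 * \<sigma>^4 \<le> k" "2 * (2 * R + R^2) \<le> k" "1250 * \<sigma>^8 \<le> k"
    unfolding k_def by simp_all
  have "summand_var n \<sigma> m t \<le> k / real n + k * M^4 * of_bool (m \<noteq> 0 \<or> t \<noteq> 0)
       + k * (M^6 + L^4) * of_bool (m * t \<noteq> 0) \<and>
     \<bar>summand_mean n \<sigma> m t\<bar> \<le> k * L / real n * of_bool (m \<noteq> 0 \<or> t \<noteq> 0)
       + k * L^2 * of_bool (m * t \<noteq> 0)"
    if n: "3 \<le> n" and M: "\<bar>m\<bar> \<le> M" "\<bar>t\<bar> \<le> M" "1 \<le> M" and L: "L = ln (real n)" for n M m t L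
  proof -
    have "0 < n" "1 \<le> L" "0 \<le> M^4" "0 \<le> M^6" "0 \<le> L^4"
      using n M(3) ln_bounds(1)[OF n] by (simp_all add: L)
    have null: "summand_var n \<sigma> 0 0 \<le> k / real n"
      using summand_var_null_le[OF \<open>0 < n\<close>] divide_right_mono[OF k(2), of "real n"]
      unfolding G_def by linarith
    have one_zero: "\<bar>summand_mean n \<sigma> m t\<bar> \<le> k * L / real n \<and> summand_var n \<sigma> m t \<le> k * M^4"
      if "m = 0 \<or> t = 0"
    proof
      have "(G^2 + 5 * \<sigma>^2 * G) * L / real n \<le> k * L / real n"
        using k(3) \<open>1 \<le> L\<close> by (intro divide_right_mono mult_right_mono) auto
      then show "\<bar>summand_mean n \<sigma> m t\<bar> \<le> k * L / real n"
        using abs_summand_mean_one_zero_le[OF n that, folded G_def L] by linarith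
      show "summand_var n \<sigma> m t \<le> k * M^4"
        using summand_var_one_zero_le[where n=n, OF that M, folded R_def] mult_right_mono[OF k(4) \<open>0 \<le> M^4\<close>]
        by linarith
    qed
    have general: "\<bar>summand_mean n \<sigma> m t\<bar> \<le> k * L^2 \<and> summand_var n \<sigma> m t \<le> k * (M^6 + L^4)"
      using abs_summand_mean_le[OF n, of m t, folded G_def L] summand_var_general_le[OF n M, folded R_def L]
        \<open>0 \<le> M^6\<close> \<open>0 \<le> L^4\<close>
        mult_right_mono[OF k(5), of "L^2"] mult_right_mono[OF k(6), of "M^6"]
        mult_right_mono[OF k(7), of "L^4"]
      by (simp add: distrib_left)
    have "0 \<le> k / real n" "0 \<le> k * M^4" "0 \<le> k * L / real n"
      using k(1) \<open>1 \<le> L\<close> \<open>0 \<le> M^4\<close> by simp_all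
    then show ?thesis
      using null one_zero general summand_mean_null
      by (cases "m = 0 \<and> t = 0"; cases "m * t = 0") auto
  qed
  then show ?thesis
    using k(1) unfolding summand_bound_const_def by blast
qed

lemma mse_Q4hat_eq:
  "(\<integral>\<^sup>+ \<omega>. ennreal ((Q4hat n \<sigma> \<omega> - Qfun n \<mu> \<theta>)^2) \<partial>sample_law n \<mu> \<theta> \<sigma>) =
    ennreal (((\<Sum>i<n. summand_var n \<sigma> (\<mu> i) (\<theta> i)) + (\<Sum>i<n. summand_mean n \<sigma> (\<mu> i) (\<theta> i))^2)
      / (real n)^2)"
proof -
  let ?M = "\<lambda>i. gauss_pair (\<mu> i) (\<theta> i) \<sigma>" and ?w = "\<lambda>i. summand_error n \<sigma> (\<mu> i) (\<theta> i)"
  interpret finite_product_prob_space ?M "{..<n}"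
    unfolding finite_product_prob_space_def finite_product_sigma_finite_def product_prob_space_def
      product_sigma_finite_def finite_product_sigma_finite_axioms_def product_prob_space_axioms_def
    using prob_space_gauss_pair prob_space_imp_sigma_finite by auto
  note sq = integral_square_sum_components[of ?w, OF integrable_summand_error integrable_summand_error_sq]
  have "Q4hat n \<sigma> \<omega> - Qfun n \<mu> \<theta> = (\<Sum>i<n. ?w i (\<omega> i)) / real n" for \<omega>
    by (simp add: Q4hat_def Qfun_def summand_error_def sum_subtractf diff_divide_distrib)
  then have "(\<integral>\<^sup>+ \<omega>. ennreal ((Q4hat n \<sigma> \<omega> - Qfun n \<mu> \<theta>)^2) \<partial>sample_law n \<mu> \<theta> \<sigma>) =
      (\<integral>\<^sup>+ \<omega>. ennreal ((\<Sum>i<n. ?w i (\<omega> i))^2 / (real n)^2) \<partial>PiM {..<n} ?M)"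
    by (simp add: sample_law_def power_divide)
  also have "\<dots> = ennreal ((\<integral>\<omega>. (\<Sum>i<n. ?w i (\<omega> i))^2 \<partial>PiM {..<n} ?M) / (real n)^2)"
    using sq(1) by (subst nn_integral_eq_integral) auto
  finally show ?thesis
    by (simp add: sq(2) summand_var_def summand_mean_def)
qed

end

section \<open>Summing over the coordinates\<close>

lemma bias_arith:
  fixes k M L N p q s1 s2 :: real
  assumes k: "0 \<le> k" and M: "1 \<le> M" and L: "0 \<le> L" "L^2 \<le> 4 * N"
    and p: "1 \<le> p" "p \<le> N" and s1: "0 \<le> s1" "s1 \<le> 2 * p" and s2: "0 \<le> s2" "s2 \<le> q"
  shows "(s1 * (k * L / N) + s2 * (k * L^2))^2 \<le> 32 * (k^2 * (p * M^4)) + 2 * (k^2 * (q^2 * L^4))"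
proof -
  have "0 < N" "1 \<le> M^4"
    using p M by simp_all
  have "(s1 * (k * L / N))^2 \<le> (2 * p * (k * L / N))^2"
    using s1 k L \<open>0 < N\<close> by (intro power_mono mult_right_mono) auto
  also have "\<dots> = 4 * k^2 * p * (p / N) * (L^2 / N)"
    by (simp add: power_mult_distrib power_divide power2_eq_square)
  also have "\<dots> \<le> 4 * k^2 * p * 1 * 4"
    using p L \<open>0 < N\<close> by (intro mult_mono) (auto simp: divide_le_eq)
  also have "\<dots> \<le> 16 * (k^2 * (p * M^4))"
    using mult_left_mono[OF mult_left_mono[OF \<open>1 \<le> M^4\<close>, of p], of "16 * k^2"] p by simp
  finally have bias1: "(s1 * (k * L / N))^2 \<le> 16 * (k^2 * (p * M^4))" .
  have bias2: "(s2 * (k * L^2))^2 \<le> k^2 * (q^2 * L^4)"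
    using power_mono[OF mult_right_mono[OF s2(2), of "k * L^2"], of 2] s2 k
    by (simp add: power_mult_distrib mult_ac flip: power_mult)
  have "(x + y)^2 \<le> 2 * x^2 + 2 * y^2" for x y :: real
    using zero_le_power2[of "x - y"] by (simp add: power2_eq_square algebra_simps)
  from this[of "s1 * (k * L / N)" "s2 * (k * L^2)"] show ?thesis
    using bias1 bias2 by linarith
qed

text \<open>\<open>s\<^sub>1\<close> counts the coordinates in the union of the supports of \<open>\<mu>\<close> and \<open>\<theta>\<close>,
  \<open>s\<^sub>2\<close> those in their intersection.\<close>
lemma variance_bias_arith:
  fixes k M L N p q s1 s2 :: real
  assumes k: "1 \<le> k" and M: "1 \<le> M" and L: "1 \<le> L" "L^2 \<le> 4 * N"
    and p: "1 \<le> p" "p \<le> N" and q: "1 \<le> q"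
    and s1: "0 \<le> s1" "s1 \<le> 2 * p" and s2: "0 \<le> s2" "s2 \<le> q"
  shows "k + s1 * (k * M^4) + s2 * (k * (M^6 + L^4)) + (s1 * (k * L / N) + s2 * (k * L^2))^2
    \<le> 35 * k^2 * (p * M^4 + q * M^6 + q^2 * L^4)"
proof -
  have "1 \<le> M^4" "0 \<le> M^6"
    using M by simp_all
  have "q \<le> q^2" "k \<le> k^2"
    using mult_left_mono[OF q, of q] mult_left_mono[OF k, of k] q k by (simp_all add: power2_eq_square)
  have "1 \<le> p * M^4"
    using mult_mono[OF p(1) \<open>1 \<le> M^4\<close>] p by simp
  have "s1 * (k * M^4) \<le> 2 * (k * (p * M^4))"
    using mult_right_mono[OF s1(2), of "k * M^4"] k by (simp add: algebra_simps)
  moreover have "s2 * (k * (M^6 + L^4)) \<le> k * (q * M^6) + k * (q^2 * L^4)"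
  proof -
    have "s2 * (k * (M^6 + L^4)) \<le> k * (q * M^6) + k * (q * L^4)"
      using mult_right_mono[OF s2(2), of "k * (M^6 + L^4)"] k by (simp add: algebra_simps)
    also have "k * (q * L^4) \<le> k * (q^2 * L^4)"
      using k by (intro mult_left_mono mult_right_mono \<open>q \<le> q^2\<close>) auto
    finally show ?thesis
      by simp
  qed
  moreover have "k \<le> k * (p * M^4)"
    using mult_left_mono[OF \<open>1 \<le> p * M^4\<close>, of k] k by simp
  moreover have "0 \<le> p * M^4" "0 \<le> q * M^6" "0 \<le> q^2 * L^4"
    using \<open>1 \<le> p * M^4\<close> q \<open>0 \<le> M^6\<close> by simp_all
  then have "k * (p * M^4) \<le> k^2 * (p * M^4)" "k * (q * M^6) \<le> k^2 * (q * M^6)"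
    "k * (q^2 * L^4) \<le> k^2 * (q^2 * L^4)" "0 \<le> k^2 * (q * M^6)" "0 \<le> k^2 * (q^2 * L^4)"
    using \<open>k \<le> k^2\<close> by (simp_all add: mult_right_mono)
  moreover have "35 * k^2 * (p * M^4 + q * M^6 + q^2 * L^4)
      = 35 * (k^2 * (p * M^4)) + 35 * (k^2 * (q * M^6)) + 35 * (k^2 * (q^2 * L^4))"
    by (simp add: algebra_simps)
  moreover have "0 \<le> k" "0 \<le> L"
    using k L by simp_all
  then have "(s1 * (k * L / N) + s2 * (k * L^2))^2 \<le> 32 * (k^2 * (p * M^4)) + 2 * (k^2 * (q^2 * L^4))"
    by (intro bias_arith M L(2) p s1 s2)
  ultimately show ?thesis
    by linarith
qed

lemma Omega_bounds:
  assumes "(\<mu>, \<theta>) \<in> Omega n \<beta> \<epsilon> b"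
  shows "real (card {i. i < n \<and> (\<mu> i \<noteq> 0 \<or> \<theta> i \<noteq> 0)}) \<le> 2 * real n powr \<beta>"
    and "real (card {i. i < n \<and> \<mu> i * \<theta> i \<noteq> 0}) \<le> real n powr \<epsilon>"
    and "i < n \<Longrightarrow> \<bar>\<mu> i\<bar> \<le> real n powr b" and "i < n \<Longrightarrow> \<bar>\<theta> i\<bar> \<le> real n powr b"
proof -
  have "card {i. i < n \<and> (\<mu> i \<noteq> 0 \<or> \<theta> i \<noteq> 0)}
      \<le> card {i. i < n \<and> \<mu> i \<noteq> 0} + card {i. i < n \<and> \<theta> i \<noteq> 0}"
    by (rule order_trans[OF card_mono card_Un_le]) auto
  then show "real (card {i. i < n \<and> (\<mu> i \<noteq> 0 \<or> \<theta> i \<noteq> 0)}) \<le> 2 * real n powr \<beta>"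
    using assms unfolding Omega_def by simp
qed (use assms in \<open>simp_all add: Omega_def\<close>)

lemma sum_summand_var_mean_le:
  assumes k: "summand_bound_const \<sigma> k" and n: "3 \<le> n" and \<Omega>: "(\<mu>, \<theta>) \<in> Omega n \<beta> \<epsilon> b"
    and "0 < \<epsilon>" "\<epsilon> \<le> \<beta>" "\<beta> \<le> 1" "0 < b"
  defines "p \<equiv> real n powr \<beta>" and "q \<equiv> real n powr \<epsilon>" and "M \<equiv> real n powr b"
    and "L \<equiv> ln (real n)"
  shows "(\<Sum>i<n. summand_var n \<sigma> (\<mu> i) (\<theta> i)) + (\<Sum>i<n. summand_mean n \<sigma> (\<mu> i) (\<theta> i))^2
    \<le> 35 * k^2 * (p * M^4 + q * M^6 + q^2 * L^4)"
proof -
  define s1 where "s1 = real (card {i. i < n \<and> (\<mu> i \<noteq> 0 \<or> \<theta> i \<noteq> 0)})"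
  define s2 where "s2 = real (card {i. i < n \<and> \<mu> i * \<theta> i \<noteq> 0})"
  have "1 \<le> real n"
    using n by simp
  have M: "1 \<le> M" and p: "1 \<le> p" "p \<le> real n" and q: "1 \<le> q"
    using assms(4-7) \<open>1 \<le> real n\<close> powr_mono[of \<beta> 1 "real n"]
    by (simp_all add: M_def p_def q_def ge_one_powr_ge_zero)
  have L: "1 \<le> L" "L^2 \<le> 4 * real n"
    using ln_bounds[OF n] by (simp_all add: L_def)
  have coord: "\<bar>\<mu> i\<bar> \<le> M" "\<bar>\<theta> i\<bar> \<le> M" if "i < n" for i
    using Omega_bounds(3,4)[OF \<Omega> that] by (simp_all add: M_def)
  have card_eq: "{..<n} \<inter> {i. P i} = {i. i < n \<and> P i}" for P
    by auto
  have "(\<Sum>i<n. summand_var n \<sigma> (\<mu> i) (\<theta> i)) \<le> (\<Sum>i<n. k / real n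
      + k * M^4 * of_bool (\<mu> i \<noteq> 0 \<or> \<theta> i \<noteq> 0) + k * (M^6 + L^4) * of_bool (\<mu> i * \<theta> i \<noteq> 0))"
    using k n M coord unfolding summand_bound_const_def L_def by (intro sum_mono) blast
  also have "\<dots> = k + s1 * (k * M^4) + s2 * (k * (M^6 + L^4))"
    using n by (simp add: sum.distrib card_eq s1_def s2_def flip: sum_distrib_left)
  finally have var: "(\<Sum>i<n. summand_var n \<sigma> (\<mu> i) (\<theta> i)) \<le> k + s1 * (k * M^4) + s2 * (k * (M^6 + L^4))" .
  have "\<bar>\<Sum>i<n. summand_mean n \<sigma> (\<mu> i) (\<theta> i)\<bar> \<le> (\<Sum>i<n. \<bar>summand_mean n \<sigma> (\<mu> i) (\<theta> i)\<bar>)"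
    by (rule sum_abs)
  also have "\<dots> \<le> (\<Sum>i<n. k * L / real n * of_bool (\<mu> i \<noteq> 0 \<or> \<theta> i \<noteq> 0)
      + k * L^2 * of_bool (\<mu> i * \<theta> i \<noteq> 0))"
    using k n M coord unfolding summand_bound_const_def L_def by (intro sum_mono) blast
  also have "\<dots> = s1 * (k * L / real n) + s2 * (k * L^2)"
    by (simp add: sum.distrib card_eq s1_def s2_def flip: sum_distrib_left sum_divide_distrib)
  finally have "(\<Sum>i<n. summand_mean n \<sigma> (\<mu> i) (\<theta> i))^2 \<le> (s1 * (k * L / real n) + s2 * (k * L^2))^2"
    using power_mono[of "\<bar>_\<bar>" _ 2] by (metis abs_ge_zero power2_abs)
  moreover have "s1 \<le> 2 * p" "s2 \<le> q"
    using Omega_bounds(1,2)[OF \<Omega>] by (simp_all add: s1_def s2_def p_def q_def)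
  ultimately show ?thesis
    using var variance_bias_arith[of k M L "real n" p q s1 s2] k M L p q
    by (simp add: summand_bound_const_def s1_def s2_def)
qed

lemma rates_le_Max:
  assumes "0 < n" and "0 \<le> c"
  shows "c * (real n powr \<beta> * (real n powr b)^4 + real n powr \<epsilon> * (real n powr b)^6
      + (real n powr \<epsilon>)^2 * (ln (real n))^4) / (real n)^2
    \<le> 3 * c * Max {real n powr (2*\<epsilon> - 2) * (ln (real n))^4, real n powr (\<epsilon> + 6*b - 2),
               real n powr (\<beta> + 4*b - 2)}"
proof -
  let ?N = "real n"
  have "0 < ?N"
    using assms by simp
  then have pw: "(?N powr a)^k = ?N powr (real k * a)" and sq: "?N^2 = ?N powr 2" for a k
    by (simp_all add: powr_power)
  have "(?N powr \<beta> * (?N powr b)^4) / ?N^2 = ?N powr (\<beta> + 4*b - 2)"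
    "(?N powr \<epsilon> * (?N powr b)^6) / ?N^2 = ?N powr (\<epsilon> + 6*b - 2)"
    "((?N powr \<epsilon>)^2 * (ln ?N)^4) / ?N^2 = ?N powr (2*\<epsilon> - 2) * (ln ?N)^4"
    unfolding pw sq by (simp_all only: powr_diff powr_add of_nat_numeral times_divide_eq_left)
  moreover have "x \<le> Max {?N powr (2*\<epsilon> - 2) * (ln ?N)^4, ?N powr (\<epsilon> + 6*b - 2), ?N powr (\<beta> + 4*b - 2)}"
    if "x \<in> {?N powr (2*\<epsilon> - 2) * (ln ?N)^4, ?N powr (\<epsilon> + 6*b - 2), ?N powr (\<beta> + 4*b - 2)}" for x
    using that by (intro Max_ge) auto
  ultimately have "(?N powr \<beta> * (?N powr b)^4 + ?N powr \<epsilon> * (?N powr b)^6 + (?N powr \<epsilon>)^2 * (ln ?N)^4) / ?N^2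
    \<le> 3 * Max {?N powr (2*\<epsilon> - 2) * (ln ?N)^4, ?N powr (\<epsilon> + 6*b - 2), ?N powr (\<beta> + 4*b - 2)}"
    by (simp add: add_divide_distrib)
  from mult_left_mono[OF this \<open>0 \<le> c\<close>] show ?thesis
    by (simp add: mult.assoc)
qed

theorem theorem3:
  fixes \<beta> \<epsilon> b \<sigma> :: real
  assumes "0 < \<epsilon>" and "\<epsilon> \<le> \<beta>" and "\<beta> < 1/2" and "0 < b" and "0 < \<sigma>"
  shows "\<exists>C>0. \<exists>N. \<forall>n\<ge>N. \<forall>\<mu> \<theta>. (\<mu>, \<theta>) \<in> Omega n \<beta> \<epsilon> b \<longrightarrow>
           (\<integral>\<^sup>+ \<omega>. ennreal ((Q4hat n \<sigma> \<omega> - Qfun n \<mu> \<theta>)^2) \<partial>(sample_law n \<mu> \<theta> \<sigma>))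
             \<le> ennreal (C * Max {real n powr (2*\<epsilon> - 2) * (ln (real n))^4,
                                  real n powr (\<epsilon> + 6*b - 2),
                                  real n powr (\<beta> + 4*b - 2)})"
proof -
  obtain k where k: "summand_bound_const \<sigma> k"
    using summand_bound_const_exists[OF \<open>0 < \<sigma>\<close>] by blast
  then have "1 \<le> k"
    by (simp add: summand_bound_const_def)
  have "(\<integral>\<^sup>+ \<omega>. ennreal ((Q4hat n \<sigma> \<omega> - Qfun n \<mu> \<theta>)^2) \<partial>(sample_law n \<mu> \<theta> \<sigma>))
      \<le> ennreal (105 * k^2 * Max {real n powr (2*\<epsilon> - 2) * (ln (real n))^4,
          real n powr (\<epsilon> + 6*b - 2), real n powr (\<beta> + 4*b - 2)})"
    if n: "3 \<le> n" and \<Omega>: "(\<mu>, \<theta>) \<in> Omega n \<beta> \<epsilon> b" for n \<mu> \<theta>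
  proof -
    have "0 < n" "0 \<le> 35 * k^2" "\<beta> \<le> 1"
      using n \<open>\<beta> < 1/2\<close> by simp_all
    from order_trans[OF divide_right_mono[OF sum_summand_var_mean_le[OF k n \<Omega> assms(1,2) \<open>\<beta> \<le> 1\<close> assms(4)]]
        rates_le_Max[OF this(1,2)]]
    show ?thesis
      unfolding mse_Q4hat_eq[OF \<open>0 < \<sigma>\<close>] by (intro ennreal_leI) simp
  qed
  moreover have "0 < 105 * k^2"
    using \<open>1 \<le> k\<close> by simp
  ultimately show ?thesis
    by blast
qed

end
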